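(* Let $\beta\in\mathbb R$, $1<q<\infty$ and $f\in\mathbb M_+^2\cap\mathbb W_\infty^{\beta,\beta}$. Then \[ \omega_\varphi^2(f,\delta)_{w_{\beta,\beta},q}\le c\,\delta^{2/q}\|w_{\beta,\beta}f\|_\infty, \] with $c$ independent of $f$ and $\delta$.
   Context: For $x\in[-1,1]$, $\varphi(x)=\sqrt{1-x^2}$ and $w_{\beta,\beta}(x)=(1-x^2)^\beta$; $\|\cdot\|_\infty$ is the $L_\infty[-1,1]$ norm, $\|g\|_{L_q(S)}$ the $L_q$ norm over $S$; $\mathbb W_\infty^{\beta,\beta}=\{f:\|w_{\beta,\beta}f\|_\infty<\infty\}$. $\Delta_h^2(f,x)=f(x-h)-2f(x)+f(x+h)$ if $x\pm h\in[-1,1]$, else $0$; $\overrightarrow\Delta_h^2(f,x)=\Delta_h^2(f,x+h)$, $\overleftarrow\Delta_h^2(f,x)=\Delta_h^2(f,x-h)$. For a weight $w$: $\Omega_\varphi^2(f,\delta)_{w,q}=\sup_{0<h\le\delta}\|w(x)\Delta^2_{h\varphi(x)}(f,x)\|_{L_q[-1+8h^2,1-8h^2]}$, $\overrightarrow\Omega_\varphi^2(f,\delta)_{w,q}=\sup_{0<h\le8\delta^2}\|w\overrightarrow\Delta_h^2(f,\cdot)\|_{L_q[-1,-1+8\delta^2]}$, $\overleftarrow\Omega_\varphi^2(f,\delta)_{w,q}=\sup_{0<h\le8\delta^2}\|w\overleftarrow\Delta_h^2(f,\cdot)\|_{L_q[1-8\delta^2,1]}$, $\omega_\varphi^2=\Omega_\varphi^2+\overrightarrow\Omega_\varphi^2+\overleftarrow\Omega_\varphi^2$.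 $\mathbb M_+^2$ is the set of convex functions $f$ on $(-1,1)$ with $f(x)=0$ for all $x\in(-1,0]$. *)

theory Defs
  imports "HOL-Analysis.Analysis"
begin

definition phi :: "real \<Rightarrow> real" where
  "phi x = sqrt (1 - x\<^sup>2)"

definition wbb :: "real \<Rightarrow> real \<Rightarrow> real" where
  "wbb \<beta> x = (1 - x\<^sup>2) powr \<beta>"

definition Delta2 :: "(real \<Rightarrow> real) \<Rightarrow> real \<Rightarrow> real \<Rightarrow> real" where
  "Delta2 f h x = (if x - h \<in> {-1..1} \<and> x + h \<in> {-1..1}
                   then f (x - h) - 2 * f x + f (x + h) else 0)"

definition Delta2_fwd :: "(real \<Rightarrow> real) \<Rightarrow> real \<Rightarrow> real \<Rightarrow> real" where
  "Delta2_fwd f h x = Delta2 f h (x + h)"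

definition Delta2_bwd :: "(real \<Rightarrow> real) \<Rightarrow> real \<Rightarrow> real \<Rightarrow> real" where
  "Delta2_bwd f h x = Delta2 f h (x - h)"

definition Lq_norm :: "real set \<Rightarrow> real \<Rightarrow> (real \<Rightarrow> real) \<Rightarrow> ennreal" where
  "Lq_norm S q g =
     (let I = (\<integral>\<^sup>+ x. indicator S x * ennreal (\<bar>g x\<bar> powr q) \<partial>lborel)
      in if I = \<infinity> then \<infinity> else ennreal (enn2real I powr (1 / q)))"

text \<open>Sup norm of w_{beta,beta} f on (-1,1) (f is only given on (-1,1))\<close>
definition wsup_norm :: "real \<Rightarrow> (real \<Rightarrow> real) \<Rightarrow> real" where
  "wsup_norm \<beta> f = (SUP x\<in>{-1<..<1}. \<bar>wbb \<beta> x * f x\<bar>)"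

definition in_W_inf :: "real \<Rightarrow> (real \<Rightarrow> real) \<Rightarrow> bool" where
  "in_W_inf \<beta> f \<longleftrightarrow> bdd_above ((\<lambda>x. \<bar>wbb \<beta> x * f x\<bar>) ` {-1<..<1})"

definition in_M2plus :: "(real \<Rightarrow> real) \<Rightarrow> bool" where
  "in_M2plus f \<longleftrightarrow> convex_on {-1<..<1} f \<and> (\<forall>x\<in>{-1<..0}. f x = 0)"

definition Omega_main :: "real \<Rightarrow> real \<Rightarrow> (real \<Rightarrow> real) \<Rightarrow> real \<Rightarrow> ennreal" where
  "Omega_main \<beta> q f \<delta> = (SUP h\<in>{0<..\<delta>}.
      Lq_norm {-1 + 8 * h\<^sup>2 .. 1 - 8 * h\<^sup>2} q (\<lambda>x. wbb \<beta> x * Delta2 f (h * phi x) x))"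

definition Omega_fwd :: "real \<Rightarrow> real \<Rightarrow> (real \<Rightarrow> real) \<Rightarrow> real \<Rightarrow> ennreal" where
  "Omega_fwd \<beta> q f \<delta> = (SUP h\<in>{0<..8 * \<delta>\<^sup>2}.
      Lq_norm {-1 .. -1 + 8 * \<delta>\<^sup>2} q (\<lambda>x. wbb \<beta> x * Delta2_fwd f h x))"

definition Omega_bwd :: "real \<Rightarrow> real \<Rightarrow> (real \<Rightarrow> real) \<Rightarrow> real \<Rightarrow> ennreal" where
  "Omega_bwd \<beta> q f \<delta> = (SUP h\<in>{0<..8 * \<delta>\<^sup>2}.
      Lq_norm {1 - 8 * \<delta>\<^sup>2 .. 1} q (\<lambda>x. wbb \<beta> x * Delta2_bwd f h x))"

definition omega_phi2 :: "real \<Rightarrow> real \<Rightarrow> (real \<Rightarrow> real) \<Rightarrow> real \<Rightarrow> ennreal" where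
  "omega_phi2 \<beta> q f \<delta> = Omega_main \<beta> q f \<delta> + Omega_fwd \<beta> q f \<delta> + Omega_bwd \<beta> q f \<delta>"

end

theory Submission
  imports Defs
begin

text \<open>
  A convex f vanishing on (-1, 0] is nonnegative and nondecreasing, so near the endpoints every
  second difference is bounded by 2 f at its rightmost node, i.e. by a constant times
  the weighted sup norm M, and the end pieces contribute the length (8 delta^2)^(1/q).
  For the main part with step h phi(x) one compares with chords: pointwise
  w(x) Delta(x) <= C M h / sqrt(1 - x), while on each dyadic interval [1 - 2u, 1 - u] the second
  differences are dominated by ones of the constant step 2 h sqrt u, whose integral telescopes
  to O(M h^2). Interpolating, the q-th powers give O(M^q h^2 (h^2/u)^((q-1)/2)) per dyadic
  piece, a geometric series summing to O(M^q h^2). For beta < 0 the weighted bound forces f = 0.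
\<close>

lemma wbb_nonneg: "0 \<le> wbb \<beta> x"
  by (simp add: wbb_def)

lemma wbb_pm1: "wbb \<beta> 1 = 0" "wbb \<beta> (-1) = 0"
  by (simp_all add: wbb_def)

lemma wbb_le_wbb_mult:
  assumes "0 \<le> \<beta>" "\<bar>x\<bar> \<le> 1" "1 - x^2 \<le> c * (1 - y^2)" "0 \<le> c"
  shows "wbb \<beta> x \<le> c powr \<beta> * wbb \<beta> y"
proof -
  have "0 \<le> 1 - x^2" using abs_square_le_1[of x] assms(2) by simp
  then have "(1 - x^2) powr \<beta> \<le> (c * (1 - y^2)) powr \<beta>"
    using assms(1,3) powr_mono2 by blast
  then show ?thesis by (simp add: wbb_def powr_mult)
qed

lemma continuous_on_wbb:
  assumes "S \<subseteq> {-1<..<1}"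
  shows "continuous_on S (wbb \<beta>)"
proof -
  have "0 < 1 - x^2" if "x \<in> S" for x
    using that assms by (auto simp: abs_square_less_1 abs_less_iff)
  then show ?thesis unfolding wbb_def[abs_def]
    by (intro continuous_on_powr' continuous_intros) (auto dest: less_imp_le, fastforce)
qed

lemma phi_sq: assumes "\<bar>x\<bar> \<le> 1" shows "(phi x)^2 = 1 - x^2"
proof -
  have "x^2 \<le> 1" using assms by (simp add: abs_square_le_1)
  then show ?thesis by (simp add: phi_def)
qed

lemma phi_nonneg: assumes "\<bar>x\<bar> \<le> 1" shows "0 \<le> phi x"
proof -
  have "x^2 \<le> 1" using assms by (simp add: abs_square_le_1)
  then show ?thesis by (simp add: phi_def)
qed

lemma phi_le_1: "phi x \<le> 1"
proof -
  have "sqrt (1 - x^2) \<le> sqrt 1" by (intro real_sqrt_le_mono) simp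
  then show ?thesis by (simp add: phi_def)
qed

lemma eight_sq_le_half: "0 \<le> d \<Longrightarrow> d \<le> 1/4 \<Longrightarrow> 8 * d^2 \<le> (1/2::real)"
proof -
  assume "0 \<le> d" "d \<le> 1/4"
  then have "d * d \<le> (1/4) * (1/4)" by (intro mult_mono) auto
  then show ?thesis by (simp add: power2_eq_square)
qed

lemma square_powr_inverse: assumes "0 < x" shows "((x::real)^2) powr (1/q) = x powr (2/q)"
proof -
  have "x^2 = x powr 2" using assms by (simp add: powr_numeral)
  then show ?thesis by (simp add: powr_powr)
qed

lemma powr_minus_one_mult: "0 \<le> x \<Longrightarrow> 1 \<le> q \<Longrightarrow> x powr (q - 1) * x = x powr q"
  for x q :: real
  using powr_add[of x "q - 1" 1] by (cases "x = 0") auto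

lemma powr_mult_sixteen_sq_powr:
  fixes h a :: real
  assumes "0 < h"
  shows "h powr a * (16*h^2) powr (-(a/2)) = (1/4) powr a"
proof -
  have "16*h^2 = (4*h) powr 2" using assms by (simp add: powr_numeral power2_eq_square)
  then have "(16*h^2) powr (-(a/2)) = (4*h) powr (-a)" by (simp add: powr_powr)
  then have "h powr a * (16*h^2) powr (-(a/2)) = h powr a / (4*h) powr a"
    by (simp only: powr_minus_divide) simp
  also have "\<dots> = (h / (4*h)) powr a" by (rule powr_divide[symmetric])
  finally show ?thesis using assms by simp
qed

lemma Lq_norm_le_sup:
  assumes q: "0 < q" and B: "0 \<le> B" and ab: "a \<le> b" and g: "\<And>x. x \<in> {a..b} \<Longrightarrow> \<bar>g x\<bar> \<le> B"
  shows "Lq_norm {a..b} q g \<le> ennreal (B * (b - a) powr (1/q))"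
proof -
  define I where "I = (\<integral>\<^sup>+ x. indicator {a..b} x * ennreal (\<bar>g x\<bar> powr q) \<partial>lborel)"
  have "I \<le> (\<integral>\<^sup>+ x. ennreal (B powr q) * indicator {a..b} x \<partial>lborel)"
    unfolding I_def
  proof (intro nn_integral_mono)
    fix x
    show "indicator {a..b} x * ennreal (\<bar>g x\<bar> powr q) \<le> ennreal (B powr q) * indicator {a..b} x"
    proof (cases "x \<in> {a..b}")
      case True
      then have "\<bar>g x\<bar> powr q \<le> B powr q" using g q by (intro powr_mono2) auto
      then show ?thesis using True by (simp add: ennreal_leI)
    qed simp
  qed
  also have "\<dots> = ennreal (B powr q) * ennreal (b - a)"
    by (subst nn_integral_cmult_indicator) (use ab in auto)
  also have "\<dots> = ennreal (B powr q * (b - a))" using ab by (simp add: ennreal_mult)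
  finally have I1: "I \<le> ennreal (B powr q * (b - a))" .
  then have Ifin: "I \<noteq> \<infinity>" using ennreal_less_top[of "B powr q * (b - a)"] by (auto simp: top_unique)
  have "enn2real I \<le> B powr q * (b - a)"
    using enn2real_mono[OF I1] ab by simp
  then have "enn2real I powr (1/q) \<le> (B powr q * (b - a)) powr (1/q)"
    using q by (intro powr_mono2) auto
  also have "\<dots> = B * (b - a) powr (1/q)"
    using q B ab by (simp add: powr_mult powr_powr)
  finally show ?thesis
    unfolding Lq_norm_def Let_def I_def[symmetric] using Ifin by (simp add: ennreal_leI)
qed

lemma Lq_norm_le_integral:
  assumes q: "0 < q" and ab: "a \<le> b" and G: "\<And>x. x \<in> {a..b} \<Longrightarrow> \<bar>g x\<bar> powr q = G x"
    and cG: "continuous_on {a..b} G" and K: "integral {a..b} G \<le> K"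
  shows "Lq_norm {a..b} q g \<le> ennreal (K powr (1/q))"
proof -
  have int: "(G has_integral (integral {a..b} G)) {a..b}"
    using integrable_continuous_real[OF cG] by (simp add: has_integral_integral)
  have Gn: "\<And>x. x \<in> {a..b} \<Longrightarrow> 0 \<le> G x" using G by (metis powr_ge_zero)
  have "(\<integral>\<^sup>+ x. indicator {a..b} x * ennreal (\<bar>g x\<bar> powr q) \<partial>lborel)
      = (\<integral>\<^sup>+ x. ennreal (indicator {a..b} x * G x) \<partial>lborel)"
    by (intro nn_integral_cong) (auto simp: G split: split_indicator)
  also have "\<dots> = ennreal (integral {a..b} G)"
    using nn_integral_has_integral_lebesgue[OF Gn int] by simp
  finally have eq: "(\<integral>\<^sup>+ x. indicator {a..b} x * ennreal (\<bar>g x\<bar> powr q) \<partial>lborel) = ennreal (integral {a..b} G)" .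
  have i0: "0 \<le> integral {a..b} G" using Gn by (intro integral_nonneg integrable_continuous_real[OF cG]) auto
  have "integral {a..b} G powr (1/q) \<le> K powr (1/q)" using i0 K q by (intro powr_mono2) auto
  then show ?thesis unfolding Lq_norm_def Let_def eq using i0 by (simp add: ennreal_leI)
qed

text \<open>Telescoping: the integral of F x - F (x - T) over [a, b] only sees F near the two ends.\<close>
lemma integral_shift_diff_le:
  fixes F :: "real \<Rightarrow> real"
  assumes cont: "continuous_on {a - T .. b} F" and T: "0 \<le> T" "a \<le> b - T"
    and left: "\<And>y. y \<in> {a - T .. a} \<Longrightarrow> 0 \<le> F y"
    and right: "\<And>y. y \<in> {b - T .. b} \<Longrightarrow> F y \<le> F b"
  shows "integral {a..b} (\<lambda>x. F x - F (x - T)) \<le> T * F b"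
proof -
  have int: "F integrable_on {c..d}" if "a - T \<le> c" "d \<le> b" for c d
    using integrable_continuous_real[OF continuous_on_subset[OF cont]] that by auto
  have shift: "integral {a..b} (\<lambda>x. F (x - T)) = integral {a - T .. b - T} F"
    using integral_shift_Icc_real[of a b F "-T"] by (simp add: o_def add.commute)
  have int_shift: "(\<lambda>x. F (x - T)) integrable_on {a..b}"
    using int[of "a - T" "b - T"] has_integral_shift_Icc_real[of F "-T" _ a b] T
    by (auto simp: integrable_on_def o_def add.commute)
  have "integral {a..b} F = integral {a .. b - T} F + integral {b - T .. b} F"
    using int[of a b] T by (intro Henstock_Kurzweil_Integration.integral_combine[symmetric]) auto
  moreover have "integral {a - T .. b - T} F = integral {a - T .. a} F + integral {a .. b - T} F"
    using int[of "a - T" "b - T"] T by (intro Henstock_Kurzweil_Integration.integral_combine[symmetric]) auto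
  ultimately have "integral {a..b} (\<lambda>x. F x - F (x - T))
      = integral {b - T .. b} F - integral {a - T .. a} F"
    using int[of a b] int_shift T by (simp add: integral_diff shift)
  also have "\<dots> \<le> integral {b - T .. b} (\<lambda>_. F b) - 0"
    using int[of "b - T" b] int[of "a - T" a] left right T
    by (intro diff_mono integral_le integral_nonneg) auto
  finally show ?thesis using T by simp
qed

lemma integral_dyadic_le:
  fixes G :: "real \<Rightarrow> real"
  assumes p: "0 < p" and P: "0 \<le> P"
    and int: "G integrable_on {0 .. 1 - (1/2)^n}"
    and piece: "\<And>k. k < n \<Longrightarrow> integral {1 - (1/2)^k .. 1 - (1/2)^Suc k} G \<le> P * ((1/2)^Suc k) powr (-p)"
  shows "integral {0 .. 1 - (1/2)^n} G \<le> 2 powr p / (2 powr p - 1) * P * ((1/2)^n) powr (-p)"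
  using int piece
proof (induction n)
  case 0
  have "1 < (2::real) powr p" using p by simp
  then show ?case using P by simp
next
  case (Suc n)
  define r :: real where "r = 2 powr p"
  have r: "1 < r" using p by (simp add: r_def)
  have half: "((1/2)^Suc n) powr (-p) = r * ((1/2)^n) powr (-p)"
    by (simp add: r_def powr_divide powr_minus_divide)
  have le1: "(1/2::real)^Suc n \<le> (1/2)^n" "(1/2::real)^n \<le> 1"
    by (simp_all add: power_le_one)
  have "integral {0 .. 1 - (1/2)^Suc n} G
      = integral {0 .. 1 - (1/2)^n} G + integral {1 - (1/2)^n .. 1 - (1/2)^Suc n} G"
    using Suc.prems(1) le1 by (intro Henstock_Kurzweil_Integration.integral_combine[symmetric]) auto
  also have "\<dots> \<le> r / (r - 1) * P * ((1/2)^n) powr (-p) + P * ((1/2)^Suc n) powr (-p)"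
  proof (intro add_mono Suc.IH[unfolded r_def[symmetric]] Suc.prems(2))
    show "G integrable_on {0 .. 1 - (1/2)^n}"
      by (rule integrable_subinterval_real[OF Suc.prems(1)]) (use le1 in auto)
  qed (use Suc.prems(2) in auto)
  also have "\<dots> = r / (r - 1) * P * ((1/2)^Suc n) powr (-p)"
    using r unfolding half by (simp add: field_simps)
  finally show ?case by (simp add: r_def)
qed

lemma exists_dyadic_between:
  assumes "0 < e" "e \<le> 1"
  shows "\<exists>N. e \<le> (1/2::real)^N \<and> (1/2)^N < 2 * e"
proof -
  obtain m where m: "(1/2::real)^m < e" using real_arch_pow_inv[OF assms(1), of "1/2"] by auto
  define m0 where "m0 = (LEAST m. (1/2::real)^m < e)"
  have m0: "(1/2::real)^m0 < e" unfolding m0_def by (rule LeastI[of _ m]) (use m in simp)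
  then obtain N where N: "m0 = Suc N" using assms by (cases m0) auto
  have "\<not> (1/2::real)^N < e" unfolding m0_def by (rule not_less_Least) (use N m0_def in simp)
  then show ?thesis using m0 N by (intro exI[of _ N]) auto
qed

lemma Delta2_eq:
  "0 \<le> t \<Longrightarrow> -1 \<le> x - t \<Longrightarrow> x + t \<le> 1 \<Longrightarrow> Delta2 f t x = f (x - t) - 2 * f x + f (x + t)"
  by (simp add: Delta2_def)

lemma Delta2_fwd_eq:
  "0 \<le> h \<Longrightarrow> -1 \<le> x \<Longrightarrow> x + 2 * h \<le> 1 \<Longrightarrow> Delta2_fwd f h x = f x - 2 * f (x + h) + f (x + 2 * h)"
  by (simp add: Delta2_fwd_def Delta2_def algebra_simps)

lemma Delta2_bwd_eq:
  "0 \<le> h \<Longrightarrow> -1 \<le> x - 2 * h \<Longrightarrow> x \<le> 1 \<Longrightarrow> Delta2_bwd f h x = f (x - 2 * h) - 2 * f (x - h) + f x"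
  by (simp add: Delta2_bwd_def Delta2_def algebra_simps)

section \<open>Convex functions vanishing on (-1, 0]\<close>

lemma weighted_Delta2_fwd_eq_0:
  assumes "\<And>y. -1 < y \<Longrightarrow> y < 1 \<Longrightarrow> g y = 0" "0 < h" "-1 \<le> x" "x + 2 * h < 1"
  shows "wbb \<beta> x * Delta2_fwd g h x = 0"
  using assms assms(1)[of x] assms(1)[of "x + h"] assms(1)[of "x + 2 * h"] Delta2_fwd_eq[of h x g]
  by (cases "x = -1") (auto simp: wbb_pm1)

lemma weighted_Delta2_bwd_eq_0:
  assumes "\<And>y. -1 < y \<Longrightarrow> y < 1 \<Longrightarrow> g y = 0" "0 < h" "-1 < x - 2 * h" "x \<le> 1"
  shows "wbb \<beta> x * Delta2_bwd g h x = 0"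
  using assms assms(1)[of x] assms(1)[of "x - h"] assms(1)[of "x - 2 * h"] Delta2_bwd_eq[of h x g]
  by (cases "x = 1") (auto simp: wbb_pm1)

locale M2plus_function =
  fixes f :: "real \<Rightarrow> real"
  assumes convex: "convex_on {-1<..<1} f"
    and vanishes: "\<And>x. -1 < x \<Longrightarrow> x \<le> 0 \<Longrightarrow> f x = 0"
begin

lemma chord_le:
  assumes "-1 < x" "z < 1" "x \<le> y" "y \<le> z" "x < z"
  shows "f y * (z - x) \<le> (z - y) * f x + (y - x) * f z"
proof -
  define t where "t = (y - x) / (z - x)"
  have t: "0 \<le> t" "t \<le> 1" "t * (z - x) = y - x" using assms by (auto simp: t_def field_simps)
  have y: "y = (1 - t) *\<^sub>R x + t *\<^sub>R z" using t(3) by (simp add: algebra_simps)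
  have "f y \<le> (1 - t) * f x + t * f z"
    unfolding y by (rule convex_onD[OF convex]) (use t assms in auto)
  then have "f y * (z - x) \<le> ((1 - t) * f x + t * f z) * (z - x)"
    using assms by (intro mult_right_mono) auto
  also have "\<dots> = (z - x) * f x - (t * (z - x)) * f x + (t * (z - x)) * f z"
    by (simp add: algebra_simps)
  also have "\<dots> = (z - y) * f x + (y - x) * f z"
    unfolding t(3) by (simp add: algebra_simps)
  finally show ?thesis .
qed

lemma nonneg: assumes "-1 < y" "y < 1" shows "0 \<le> f y"
proof (cases "y \<le> 0")
  case False
  have "f 0 * (y - (-1/2)) \<le> (y - 0) * f (-1/2) + (0 - (-1/2)) * f y"
    using False assms by (intro chord_le) auto
  then show ?thesis using vanishes[of 0] vanishes[of "-1/2"] by simp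
qed (use vanishes assms in simp)

lemma mono: assumes "-1 < x" "x \<le> y" "y < 1" shows "f x \<le> f y"
proof (cases "x \<le> 0")
  case True
  then show ?thesis using vanishes[of x] nonneg[of y] assms by simp
next
  case False
  have "f x * (y - 0) \<le> (y - x) * f 0 + (x - 0) * f y"
    using False assms by (intro chord_le) auto
  then have "f x * y \<le> x * f y" using vanishes[of 0] by simp
  also have "\<dots> \<le> y * f y" using assms nonneg[of y] by (intro mult_right_mono) auto
  finally show ?thesis using False assms by simp
qed

lemma increment_mono:
  assumes "-1 < y" "y \<le> b" "b + T < 1" "0 \<le> T"
  shows "f (y + T) - f y \<le> f (b + T) - f b"
proof (cases "T = 0 \<or> y = b")
  case False
  then have T: "T > 0" "y < b" using assms by auto
  have I: "y \<in> {-1<..<1}" "b + T \<in> {-1<..<1}" using assms T by auto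
  have "(f y - f (y + T)) / (y - (y + T)) \<le> (f y - f (b + T)) / (y - (b + T))"
    by (rule convex_on_slope_le(1)[OF convex I]) (use T in auto)
  also have "\<dots> \<le> (f b - f (b + T)) / (b - (b + T))"
    by (rule convex_on_slope_le(2)[OF convex I]) (use T in auto)
  finally have "T * (f b + f (T + y)) \<le> T * (f y + f (T + b))"
    using T by (simp add: field_simps)
  then show ?thesis using T by (simp add: add.commute)
qed auto

lemma second_diff_nonneg:
  assumes "-1 < x - s" "x + s < 1" "0 \<le> s"
  shows "0 \<le> f (x - s) - 2 * f x + f (x + s)"
proof (cases "s = 0")
  case False
  have "f x * ((x + s) - (x - s)) \<le> ((x + s) - x) * f (x - s) + (x - (x - s)) * f (x + s)"
    using assms False by (intro chord_le) auto
  then have "s * (2 * f x) \<le> s * (f (x - s) + f (x + s))" by (simp add: algebra_simps)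
  then show ?thesis using assms False by simp
qed simp

lemma second_diff_mono:
  assumes "-1 < x - T" "x + T < 1" "0 \<le> s" "s \<le> T"
  shows "f (x - s) - 2 * f x + f (x + s) \<le> f (x - T) - 2 * f x + f (x + T)"
proof (cases "s = T")
  case False
  then have sT: "s < T" using assms by simp
  have "f (x + s) * ((x + T) - x) \<le> ((x + T) - (x + s)) * f x + ((x + s) - x) * f (x + T)"
    and "f (x - s) * (x - (x - T)) \<le> (x - (x - s)) * f (x - T) + ((x - s) - (x - T)) * f x"
    using assms sT by (intro chord_le; auto)+
  then have "T * (f (x - s) - 2 * f x + f (x + s)) \<le> s * (f (x - T) - 2 * f x + f (x + T))"
    by (simp add: algebra_simps)
  also have "\<dots> \<le> T * (f (x - T) - 2 * f x + f (x + T))"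
    using second_diff_nonneg[of x T] assms by (intro mult_right_mono) auto
  finally show ?thesis using sT assms by simp
qed simp

lemma continuous_on_compose_f:
  assumes "continuous_on S k" "\<And>x. x \<in> S \<Longrightarrow> -1 < k x \<and> k x < 1"
  shows "continuous_on S (\<lambda>x. f (k x))"
proof (rule continuous_on_compose2[OF _ assms(1)])
  show "continuous_on {-1<..<1} f" using convex_on_continuous[OF _ convex] by simp
qed (use assms(2) in auto)

end

lemma M2plus_functionI: "in_M2plus f \<Longrightarrow> M2plus_function f"
  unfolding in_M2plus_def by unfold_locales auto

lemma abs_second_diff_le: "\<lbrakk>0 \<le> a; a \<le> F; 0 \<le> b; b \<le> F; 0 \<le> c; c \<le> F\<rbrakk> \<Longrightarrow> \<bar>a - 2 * b + c\<bar> \<le> 2 * F"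
  for a b c F :: real
  by linarith

locale M2plus_bounded = M2plus_function +
  fixes \<beta> M :: real
  assumes weighted_le: "\<And>y. -1 < y \<Longrightarrow> y < 1 \<Longrightarrow> wbb \<beta> y * f y \<le> M"
begin

lemma bound_nonneg: "0 \<le> M"
  using weighted_le[of 0] vanishes[of 0] by simp

lemma vanishes_if_exponent_neg:
  assumes b: "\<beta> < 0" and y: "-1 < y" "y < 1"
  shows "f y = 0"
proof (rule ccontr)
  assume "f y \<noteq> 0"
  then have fy: "0 < f y" and y0: "0 < y" using nonneg[OF y] vanishes[of y] y by force+
  define K where "K = M / f y + 1"
  have K1: "1 \<le> K" using bound_nonneg fy by (simp add: K_def)
  define e where "e = min (1 - y^2) (K powr (1/\<beta>))"
  have e0: "0 < e" using y K1 by (simp add: e_def abs_square_less_1 abs_less_iff)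
  have e1: "e \<le> 1 - y^2" by (simp add: e_def)
  have "(K powr (1/\<beta>)) powr \<beta> \<le> e powr \<beta>"
    by (rule powr_mono2') (use b e0 in \<open>auto simp: e_def\<close>)
  then have eK: "K \<le> e powr \<beta>" using b K1 by (simp add: powr_powr)
  \<comment> \<open>the point w with 1 - w^2 = e lies right of y, where the weight is at least K\<close>
  define w where "w = sqrt (1 - e)"
  have "e \<le> 1" using e1 zero_le_power2[of y] by linarith
  then have w2: "w^2 = 1 - e" by (simp add: w_def)
  have wy: "y \<le> w" unfolding w_def using e1 y0 by (intro real_le_rsqrt) (simp add: power2_eq_square)
  have w1: "w < 1" unfolding w_def using e0 by simp
  have "f y \<le> f w" using y wy w1 by (intro mono) auto
  moreover have "wbb \<beta> w = e powr \<beta>" using w2 by (simp add: wbb_def)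
  ultimately have "K * f y \<le> wbb \<beta> w * f w"
    using eK fy by (metis mult_mono less_imp_le powr_ge_zero)
  also have "\<dots> \<le> M" using weighted_le[of w] y wy w1 by auto
  finally have "K * f y \<le> M" .
  moreover have "K * f y = M + f y" using fy by (simp add: K_def field_simps)
  ultimately show False using fy by simp
qed

lemma Delta2_bwd_bound:
  assumes "0 < h" "-1 < x - 2 * h" "x \<le> 1"
  shows "\<bar>wbb \<beta> x * Delta2_bwd f h x\<bar> \<le> 2 * M"
proof (cases "x = 1")
  case False
  then have x: "x < 1" using assms by simp
  have "Delta2_bwd f h x = f (x - 2 * h) - 2 * f (x - h) + f x"
    using assms by (intro Delta2_bwd_eq) auto
  also have "\<bar>\<dots>\<bar> \<le> 2 * f x"
    using assms x by (intro abs_second_diff_le nonneg mono) auto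
  finally have "\<bar>Delta2_bwd f h x\<bar> \<le> 2 * f x" .
  then have "\<bar>wbb \<beta> x * Delta2_bwd f h x\<bar> \<le> wbb \<beta> x * (2 * f x)"
    using wbb_nonneg[of \<beta> x] by (simp add: abs_mult mult_left_mono)
  also have "\<dots> \<le> 2 * M" using weighted_le[of x] x assms by simp
  finally show ?thesis .
qed (simp add: wbb_pm1 bound_nonneg)

lemma Delta2_fwd_bound:
  assumes "0 \<le> \<beta>" "0 < h" "-1 \<le> x" "x + 2 * h \<le> 1/2"
  shows "\<bar>wbb \<beta> x * Delta2_fwd f h x\<bar> \<le> 2 * ((4/3) powr \<beta> * M)"
proof (cases "x = -1")
  case False
  then have x: "-1 < x" using assms by simp
  have "wbb \<beta> (1/2) = (3/4) powr \<beta>" by (simp add: wbb_def power2_eq_square)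
  then have "(3/4) powr \<beta> * f (1/2) \<le> M" using weighted_le[of "1/2"] by simp
  then have f12: "f (1/2) \<le> (4/3) powr \<beta> * M" by (simp add: powr_divide field_simps)
  have "Delta2_fwd f h x = f x - 2 * f (x + h) + f (x + 2 * h)"
    using assms by (intro Delta2_fwd_eq) auto
  also have "\<bar>\<dots>\<bar> \<le> 2 * f (1/2)"
    using assms x by (intro abs_second_diff_le nonneg mono) auto
  finally have "\<bar>Delta2_fwd f h x\<bar> \<le> 2 * f (1/2)" .
  moreover have "wbb \<beta> x \<le> 1"
    unfolding wbb_def using assms x by (intro powr_le1) (auto simp: abs_square_le_1)
  ultimately have "\<bar>wbb \<beta> x * Delta2_fwd f h x\<bar> \<le> 1 * (2 * f (1/2))"
    using wbb_nonneg[of \<beta> x] unfolding abs_mult by (intro mult_mono) auto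
  then show ?thesis using f12 by simp
qed (simp add: wbb_pm1 bound_nonneg)

end

lemma M2plus_bounded_wsup_norm:
  assumes "in_M2plus f" "in_W_inf \<beta> f"
  shows "M2plus_bounded f \<beta> (wsup_norm \<beta> f)"
proof -
  interpret M2plus_function f using assms(1) by (rule M2plus_functionI)
  show ?thesis
  proof
    fix y :: real assume "-1 < y" "y < 1"
    then have "\<bar>wbb \<beta> y * f y\<bar> \<le> wsup_norm \<beta> f"
      unfolding wsup_norm_def using assms(2) by (intro cSUP_upper) (auto simp: in_W_inf_def)
    then show "wbb \<beta> y * f y \<le> wsup_norm \<beta> f" by linarith
  qed
qed

section \<open>The main part of the modulus\<close>

definition pointwise_const :: "real \<Rightarrow> real" where
  "pointwise_const \<beta> = 2 * sqrt 2 * 2 powr \<beta>"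

definition dyadic_const :: "real \<Rightarrow> real" where
  "dyadic_const \<beta> = 16 powr \<beta> * 16 / 3"

text \<open>In main_const the summand 33 = 1 + 32 accounts for the pieces [-1 + 8h^2, 0] and
  [1 - 32h^2, 1 - 8h^2] of the region, the other summand for the dyadic pieces in between.\<close>
definition main_const :: "real \<Rightarrow> real \<Rightarrow> real" where
  "main_const \<beta> q = 33 * pointwise_const \<beta> powr q
     + 2 powr ((q - 1) / 2) / (2 powr ((q - 1) / 2) - 1) * dyadic_const \<beta> * (pointwise_const \<beta> / 4) powr (q - 1)"

definition omega_const :: "real \<Rightarrow> real \<Rightarrow> real" where
  "omega_const \<beta> q = main_const \<beta> q powr (1/q) + (2 * (4/3) powr \<beta> + 2) * 8 powr (1/q)"

locale phi_step =
  fixes h :: real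
  assumes step_pos: "0 < h" and step_le: "h \<le> 1/4"
begin

definition step :: "real \<Rightarrow> real" where
  "step x = h * phi x"

lemma step_sq_small: "8 * h^2 \<le> 1/2"
  using eight_sq_le_half step_pos step_le by simp

lemma step_sq: assumes "-1 \<le> x" "x \<le> 1" shows "(step x)^2 = h^2 * ((1 - x) * (1 + x))"
proof -
  have "(step x)^2 = h^2 * (1 - x^2)" using phi_sq[of x] assms by (simp add: step_def power_mult_distrib)
  then show ?thesis by (simp add: algebra_simps power2_eq_square)
qed

lemma step_nonneg: assumes "-1 \<le> x" "x \<le> 1" shows "0 \<le> step x"
  using phi_nonneg[of x] assms step_pos by (simp add: step_def)

lemma step_le_half_dist:
  assumes x: "-1 + 8*h^2 \<le> x" "x \<le> 1 - 8*h^2"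
  shows "step x \<le> (1 - x) / 2" "step x \<le> (1 + x) / 2"
proof -
  have x1: "-1 \<le> x" "x \<le> 1" using x by (smt (verit) zero_le_power2)+
  have "(step x)^2 = h^2 * ((1 - x) * (1 + x))" by (rule step_sq[OF x1])
  also have "\<dots> \<le> ((1 - x) / 8) * ((1 - x) * 2)" using x x1 by (intro mult_mono) auto
  also have "\<dots> = ((1 - x) / 2)^2" by (simp add: power2_eq_square field_simps)
  finally show "step x \<le> (1 - x) / 2" by (rule power2_le_imp_le) (use x1 in auto)
  have "(step x)^2 = h^2 * ((1 - x) * (1 + x))" by (rule step_sq[OF x1])
  also have "\<dots> \<le> ((1 + x) / 8) * (2 * (1 + x))" using x x1 by (intro mult_mono) auto
  also have "\<dots> = ((1 + x) / 2)^2" by (simp add: power2_eq_square field_simps)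
  finally show "step x \<le> (1 + x) / 2" by (rule power2_le_imp_le) (use x1 in auto)
qed

lemma region_points:
  assumes "-1 + 8*h^2 \<le> x" "x \<le> 1 - 8*h^2"
  shows "-1 < x - step x" "x + step x < 1" "-1 < x" "x < 1" "0 \<le> step x"
proof -
  have "0 < 8 * h^2" using step_pos by simp
  then show x: "-1 < x" "x < 1" using assms by linarith+
  then show "-1 < x - step x" "x + step x < 1" using step_le_half_dist[OF assms] by auto
  show "0 \<le> step x" using step_nonneg x by simp
qed

lemma dyadic_step:
  assumes "16 * h^2 \<le> u"
  shows "0 < u" "0 \<le> 2 * h * sqrt u" "2 * h * sqrt u \<le> u / 2" "(2 * h * sqrt u)^2 = 4 * h^2 * u"
proof -
  show u0: "0 < u" using assms step_pos by (smt (verit) zero_less_power2)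
  show T2: "(2 * h * sqrt u)^2 = 4 * h^2 * u" using u0 by (simp add: power_mult_distrib)
  show "0 \<le> 2 * h * sqrt u" using step_pos u0 by simp
  have "(2 * h * sqrt u)^2 \<le> (u/4) * u" unfolding T2 using assms u0 by (intro mult_right_mono) auto
  also have "\<dots> = (u/2)^2" by (simp add: power2_eq_square)
  finally show "2 * h * sqrt u \<le> u / 2" by (rule power2_le_imp_le) (use u0 in simp)
qed

lemma Delta2_phi_step_eq:
  assumes "-1 + 8*h^2 \<le> x" "x \<le> 1 - 8*h^2"
  shows "Delta2 g (h * phi x) x = g (x - step x) - 2 * g x + g (x + step x)"
  using region_points[OF assms] Delta2_eq[of "step x" x g] by (simp add: step_def)

lemma Delta2_phi_step_eq_0:
  assumes "\<And>y. -1 < y \<Longrightarrow> y < 1 \<Longrightarrow> g y = 0" "-1 + 8*h^2 \<le> x" "x \<le> 1 - 8*h^2"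
  shows "Delta2 g (h * phi x) x = 0"
  using region_points[OF assms(2,3)] assms(1)[of x] assms(1)[of "x - step x"] assms(1)[of "x + step x"]
    Delta2_phi_step_eq[OF assms(2,3), of g] by simp

end

locale main_term = M2plus_bounded + phi_step +
  assumes exponent_nonneg: "0 \<le> \<beta>"
begin

definition sdiff :: "real \<Rightarrow> real" where
  "sdiff x = f (x - step x) - 2 * f x + f (x + step x)"

definition wsdiff :: "real \<Rightarrow> real" where
  "wsdiff x = wbb \<beta> x * sdiff x"

lemma Delta2_eq_sdiff:
  "-1 + 8*h^2 \<le> x \<Longrightarrow> x \<le> 1 - 8*h^2 \<Longrightarrow> Delta2 f (h * phi x) x = sdiff x"
  unfolding sdiff_def by (rule Delta2_phi_step_eq)

lemma sdiff_nonneg: assumes "-1 + 8*h^2 \<le> x" "x \<le> 1 - 8*h^2" shows "0 \<le> sdiff x"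
  using region_points[OF assms] unfolding sdiff_def by (intro second_diff_nonneg) auto

lemma wsdiff_nonneg: assumes "-1 + 8*h^2 \<le> x" "x \<le> 1 - 8*h^2" shows "0 \<le> wsdiff x"
  using sdiff_nonneg[OF assms] wbb_nonneg unfolding wsdiff_def by simp

lemma sdiff_eq_0_left: assumes "-1 + 8*h^2 \<le> x" "x \<le> -h" shows "sdiff x = 0"
proof -
  have "x \<le> 1 - 8*h^2" using assms step_sq_small step_pos by linarith
  note p = region_points[OF assms(1) this]
  have "step x \<le> h" using phi_le_1[of x] step_pos by (simp add: step_def mult_left_le)
  then show ?thesis unfolding sdiff_def using p assms vanishes by auto
qed

lemma sdiff_le_midpoint:
  assumes x: "-1 + 8*h^2 \<le> x" "x \<le> 1 - 8*h^2"
  shows "sdiff x * ((1 - x) / 2) \<le> step x * f ((1 + x) / 2)"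
proof -
  note p = region_points[OF x]
  define s t where "s = (1 + x) / 2" and "t = step x"
  have t: "0 \<le> t" "t \<le> (1 - x) / 2" using step_le_half_dist[OF x] p by (simp_all add: t_def)
  have s: "x + t \<le> s" "s < 1" "x < s" using t p by (auto simp: s_def)
  have "f (x + t) * (s - x) \<le> (s - (x + t)) * f x + ((x + t) - x) * f s"
    using p s t by (intro chord_le) auto
  then have "(f (x + t) - f x) * (s - x) \<le> t * f s - t * f x"
    by (simp add: algebra_simps)
  then have increment: "(f (x + t) - f x) * ((1 - x) / 2) \<le> t * f s - t * f x"
    by (simp add: s_def field_simps)
  have "sdiff x \<le> f (x + t) - f x"
    using mono[of "x - t" x] p t by (simp add: sdiff_def t_def)
  then have "sdiff x * ((1 - x) / 2) \<le> (f (x + t) - f x) * ((1 - x) / 2)"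
    using p by (intro mult_right_mono) auto
  also have "\<dots> \<le> t * f s - t * f x" by (rule increment)
  also have "\<dots> \<le> t * f s" using nonneg[of x] p t by simp
  finally show ?thesis by (simp add: s_def t_def)
qed

text \<open>The weight at x is comparable to the weight at the midpoint of [x, 1], where the weighted
  bound controls f.\<close>
lemma wsdiff_le:
  assumes x: "-1 + 8*h^2 \<le> x" "x \<le> 1 - 8*h^2" and u: "0 < u" "u \<le> 1 - x"
  shows "wsdiff x \<le> pointwise_const \<beta> * M * h / sqrt u"
proof -
  note p = region_points[OF x]
  define s c where "s = (1 + x) / 2" and "c = h * sqrt 2 / sqrt u"
  have c0: "0 \<le> c" using step_pos u by (simp add: c_def)
  have s: "-1 < s" "s < 1" using p by (auto simp: s_def)
  have fs: "0 \<le> f s" using s by (intro nonneg)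
  have "step x \<le> c * (1 - x)"
  proof (rule power2_le_imp_le)
    have "(step x)^2 = h^2 * ((1 - x) * (1 + x))" using step_sq p by simp
    also have "\<dots> \<le> h^2 * ((1 - x) * 2)" by (intro mult_left_mono) (use p in auto)
    also have "\<dots> \<le> h^2 * ((1 - x) * 2) * ((1 - x) / u)"
      using mult_left_mono[of 1 "(1 - x) / u" "h^2 * ((1 - x) * 2)"] p u by simp
    also have "\<dots> = (c * (1 - x))^2" using u by (simp add: c_def power2_eq_square field_simps)
    finally show "(step x)^2 \<le> (c * (1 - x))^2" .
  qed (use c0 p in auto)
  then have "step x * f s \<le> c * (1 - x) * f s" using fs by (rule mult_right_mono)
  with sdiff_le_midpoint[OF x, folded s_def]
  have "sdiff x * ((1 - x) / 2) \<le> c * (1 - x) * f s" by (rule order_trans)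
  also have "\<dots> = (2 * c * f s) * ((1 - x) / 2)" by simp
  finally have sdiff: "sdiff x \<le> 2 * c * f s" using p by simp
  have "2 * (1 - s^2) - (1 - x^2) = (1 - x)^2 / 2"
    by (simp add: s_def power2_eq_square field_simps)
  moreover have "0 \<le> (1 - x)^2 / 2" by simp
  ultimately have "1 - x^2 \<le> 2 * (1 - s^2)" by linarith
  then have "wbb \<beta> x \<le> 2 powr \<beta> * wbb \<beta> s"
    using exponent_nonneg p by (intro wbb_le_wbb_mult) auto
  then have "wsdiff x \<le> (2 powr \<beta> * wbb \<beta> s) * (2 * c * f s)"
    unfolding wsdiff_def using sdiff sdiff_nonneg[OF x] wbb_nonneg c0 fs by (intro mult_mono) auto
  also have "\<dots> = 2 powr \<beta> * 2 * c * (wbb \<beta> s * f s)" by (simp add: algebra_simps)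
  also have "\<dots> \<le> 2 powr \<beta> * 2 * c * M" using weighted_le[of s] s c0 by (intro mult_left_mono) auto
  also have "\<dots> = pointwise_const \<beta> * M * h / sqrt u" by (simp add: pointwise_const_def c_def)
  finally show ?thesis .
qed

lemma continuous_on_wsdiff: "continuous_on {-1 + 8*h^2 .. 1 - 8*h^2} wsdiff"
proof -
  let ?R = "{-1 + 8*h^2 .. 1 - 8*h^2}"
  have p: "\<And>x. x \<in> ?R \<Longrightarrow> -1 < x - step x \<and> x - step x < 1 \<and> -1 < x + step x \<and> x + step x < 1 \<and> -1 < x \<and> x < 1"
    using region_points by fastforce
  have step: "continuous_on S step" for S
    unfolding step_def phi_def by (intro continuous_intros)
  have "continuous_on ?R (\<lambda>x. f (x - step x))"
    by (rule continuous_on_compose_f) (use p in \<open>auto intro!: continuous_intros step\<close>)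
  moreover have "continuous_on ?R (\<lambda>x. f (x + step x))"
    by (rule continuous_on_compose_f) (use p in \<open>auto intro!: continuous_intros step\<close>)
  moreover have "continuous_on ?R (\<lambda>x. f x)"
    by (rule continuous_on_compose_f[where k = "\<lambda>x. x"]) (use p in \<open>auto intro!: continuous_intros\<close>)
  moreover have "continuous_on ?R (wbb \<beta>)" using p by (intro continuous_on_wbb) auto
  ultimately show ?thesis unfolding wsdiff_def[abs_def] sdiff_def
    by (intro continuous_intros)
qed

lemma wsdiff_powr_integrable:
  assumes "0 < q" "{a..b} \<subseteq> {-1 + 8*h^2 .. 1 - 8*h^2}"
  shows "(\<lambda>x. wsdiff x powr q) integrable_on {a..b}"
proof (rule integrable_continuous_real)
  show "continuous_on {a..b} (\<lambda>x. wsdiff x powr q)"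
    using assms wsdiff_nonneg
    by (intro continuous_on_powr' continuous_on_subset[OF continuous_on_wsdiff] continuous_intros)
      (auto simp: subset_iff)
qed

lemma wsdiff_integrable:
  "{a..b} \<subseteq> {-1 + 8*h^2 .. 1 - 8*h^2} \<Longrightarrow> wsdiff integrable_on {a..b}"
  by (rule integrable_continuous_real[OF continuous_on_subset[OF continuous_on_wsdiff]])

text \<open>On the dyadic interval [1 - 2u, 1 - u] the steps h phi x are at most T = 2 h sqrt u,
  so by monotonicity of second differences of convex functions wsdiff is dominated by a
  second difference with the constant step T, whose integral telescopes.\<close>
lemma wsdiff_le_const_step:
  assumes u: "16 * h^2 \<le> u" "0 \<le> 1 - 2*u" and x: "1 - 2*u \<le> x" "x \<le> 1 - u"
  defines "T \<equiv> 2 * h * sqrt u"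
  shows "wsdiff x \<le> (4*u) powr \<beta> * (f (x - T) - 2 * f x + f (x + T))"
proof -
  have xR: "-1 + 8*h^2 \<le> x" "x \<le> 1 - 8*h^2" using u x step_sq_small by auto
  note p = region_points[OF xR]
  note T = dyadic_step[OF u(1), folded T_def]
  have "(1 - x) * (1 + x) \<le> (2*u) * 2" using x u p by (intro mult_mono) auto
  then have dist: "1 - x^2 \<le> 4 * u" by (simp add: power2_eq_square algebra_simps)
  have "step x \<le> T"
  proof (rule power2_le_imp_le)
    have "(step x)^2 = h^2 * (1 - x^2)" using phi_sq[of x] p by (simp add: step_def power_mult_distrib)
    also have "\<dots> \<le> h^2 * (4 * u)" using dist by (intro mult_left_mono) auto
    finally show "(step x)^2 \<le> T^2" using T by simp
  qed (use T in simp)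
  moreover note \<open>T \<le> u / 2\<close>
  ultimately have "sdiff x \<le> f (x - T) - 2 * f x + f (x + T)"
    unfolding sdiff_def using p x u by (intro second_diff_mono) auto
  moreover have "wbb \<beta> x \<le> (4*u) powr \<beta>"
    unfolding wbb_def using dist exponent_nonneg p by (intro powr_mono2) (auto simp: abs_square_le_1)
  ultimately show ?thesis
    unfolding wsdiff_def using sdiff_nonneg[OF xR] by (intro mult_mono) auto
qed

text \<open>The boundary term of the telescoping: a chord through 1 - u/4 bounds the increment of f at
  1 - u by f (1 - u/4), and there the weight is at least (u/4)^beta.\<close>
lemma boundary_increment_le:
  assumes u: "16 * h^2 \<le> u" "u \<le> 1/2"
  defines "T \<equiv> 2 * h * sqrt u"
  shows "(4*u) powr \<beta> * (T * (f (1 - u + T) - f (1 - u))) \<le> dyadic_const \<beta> * M * h^2"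
proof -
  note T = dyadic_step[OF u(1), folded T_def]
  define b s where "b = 1 - u" and "s = 1 - u/4"
  have s: "b + T \<le> s" "s < 1" "-1 < b" "0 \<le> s" using T u by (auto simp: s_def b_def)
  have "f (b + T) * (s - b) \<le> (s - (b + T)) * f b + ((b + T) - b) * f s"
    using s T by (intro chord_le) (auto simp: s_def b_def)
  then have "(f (b + T) - f b) * (s - b) \<le> T * f s - T * f b" by (simp add: algebra_simps)
  also have "\<dots> \<le> T * f s" using nonneg[of b] s T by simp
  finally have increment: "(f (b + T) - f b) * (3*u/4) \<le> T * f s" by (simp add: s_def b_def)
  have "(u/4) * 1 \<le> (u/4) * (1 + s)" using s T by (intro mult_left_mono) auto
  also have "\<dots> = 1 - s^2" by (simp add: s_def power2_eq_square algebra_simps)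
  finally have "(u/4) powr \<beta> * f s \<le> wbb \<beta> s * f s"
    unfolding wbb_def using exponent_nonneg T nonneg[of s] s by (intro mult_right_mono powr_mono2) auto
  also have "\<dots> \<le> M" using weighted_le[of s] s by auto
  finally have ws: "(u/4) powr \<beta> * f s \<le> M" .
  have "(4*u) powr \<beta> * (T * (f (b + T) - f b)) \<le> (4*u) powr \<beta> * (T * (T * f s / (3*u/4)))"
    using increment T by (intro mult_left_mono) (simp_all add: field_simps)
  also have "\<dots> = 16 powr \<beta> * (16/3) * h^2 * ((u/4) powr \<beta> * f s)"
    using T by (simp add: power2_eq_square powr_mult[symmetric] field_simps)
  also have "\<dots> \<le> 16 powr \<beta> * (16/3) * h^2 * M" using ws by (intro mult_left_mono) auto
  finally show ?thesis by (simp add: dyadic_const_def b_def algebra_simps)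
qed

lemma integral_wsdiff_dyadic_le:
  assumes u: "16 * h^2 \<le> u" "0 \<le> 1 - 2*u"
  shows "integral {1 - 2*u .. 1 - u} wsdiff \<le> dyadic_const \<beta> * M * h^2"
proof -
  define a b T where "a = 1 - 2*u" and "b = 1 - u" and "T = 2 * h * sqrt u"
  define F where "F y = f (y + T) - f y" for y
  note T = dyadic_step[OF u(1), folded T_def]
  have inside: "-1 < y \<and> y < 1 \<and> -1 < y + T \<and> y + T < 1" if "a - T \<le> y" "y \<le> b" for y
    using that u T by (auto simp: a_def b_def)
  have contF: "continuous_on {a - T .. b} F"
    unfolding F_def using inside by (intro continuous_intros continuous_on_compose_f) auto
  have "integral {a..b} wsdiff \<le> integral {a..b} (\<lambda>x. (4*u) powr \<beta> * (F x - F (x - T)))"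
  proof (rule integral_le)
    show "wsdiff integrable_on {a..b}"
      using u step_sq_small by (intro wsdiff_integrable) (auto simp: a_def b_def)
    have "continuous_on {a..b} (\<lambda>x. F x - F (x - T))"
      using T by (intro continuous_on_diff continuous_on_subset[OF contF]
          continuous_on_compose2[OF contF] continuous_intros) auto
    then show "(\<lambda>x. (4*u) powr \<beta> * (F x - F (x - T))) integrable_on {a..b}"
      by (intro integrable_continuous_real continuous_on_mult_left)
    show "wsdiff x \<le> (4*u) powr \<beta> * (F x - F (x - T))" if "x \<in> {a..b}" for x
      using wsdiff_le_const_step[of u x] that u by (simp add: F_def T_def a_def b_def algebra_simps)
  qed
  also have "\<dots> = (4*u) powr \<beta> * integral {a..b} (\<lambda>x. F x - F (x - T))" by simp
  also have "\<dots> \<le> (4*u) powr \<beta> * (T * F b)"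
  proof (intro mult_left_mono integral_shift_diff_le[OF contF])
    show "0 \<le> F y" if "y \<in> {a - T .. a}" for y
      using inside[of y] that T mono[of y "y + T"] by (simp add: F_def a_def b_def)
    show "F y \<le> F b" if "y \<in> {b - T .. b}" for y
      unfolding F_def using inside that T u by (intro increment_mono) (auto simp: a_def b_def)
  qed (use T u in \<open>auto simp: a_def b_def\<close>)
  also have "\<dots> \<le> dyadic_const \<beta> * M * h^2"
    using boundary_increment_le[of u] u by (simp add: F_def T_def b_def algebra_simps)
  finally show ?thesis by (simp add: a_def b_def)
qed

lemma integral_wsdiff_powr_dyadic_le:
  assumes u: "16 * h^2 \<le> u" "0 \<le> 1 - 2*u" and q: "1 \<le> q"
  shows "integral {1 - 2*u .. 1 - u} (\<lambda>x. wsdiff x powr q)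
    \<le> (pointwise_const \<beta> * M) powr (q - 1) * (dyadic_const \<beta> * M * h^2) * h powr (q - 1)
       * u powr (- ((q - 1) / 2))"
proof -
  have u0: "0 < u" using dyadic_step(1)[OF u(1)] .
  have R: "{1 - 2*u .. 1 - u} \<subseteq> {-1 + 8*h^2 .. 1 - 8*h^2}" using u step_sq_small by auto
  define B where "B = pointwise_const \<beta> * M * h / sqrt u"
  have pointwise: "wsdiff x powr q \<le> B powr (q - 1) * wsdiff x" if x: "x \<in> {1 - 2*u .. 1 - u}" for x
  proof -
    have xR: "-1 + 8*h^2 \<le> x" "x \<le> 1 - 8*h^2" using R x by auto
    have g0: "0 \<le> wsdiff x" by (rule wsdiff_nonneg[OF xR])
    have "wsdiff x \<le> B" unfolding B_def by (rule wsdiff_le[OF xR u0]) (use x in auto)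
    then have "wsdiff x powr (q - 1) \<le> B powr (q - 1)" using q g0 by (intro powr_mono2) auto
    moreover have "wsdiff x powr q = wsdiff x powr (q - 1) * wsdiff x"
      using powr_minus_one_mult g0 q by simp
    ultimately show ?thesis using g0 by (simp add: mult_right_mono)
  qed
  have "integral {1 - 2*u .. 1 - u} (\<lambda>x. wsdiff x powr q)
      \<le> integral {1 - 2*u .. 1 - u} (\<lambda>x. B powr (q - 1) * wsdiff x)"
    using wsdiff_powr_integrable[OF _ R] integrable_cmul[OF wsdiff_integrable[OF R], of "B powr (q - 1)"]
      pointwise q by (intro integral_le) auto
  also have "\<dots> = B powr (q - 1) * integral {1 - 2*u .. 1 - u} wsdiff" by simp
  also have "\<dots> \<le> B powr (q - 1) * (dyadic_const \<beta> * M * h^2)"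
    by (rule mult_left_mono[OF integral_wsdiff_dyadic_le[OF u]]) simp
  also have "B powr (q - 1) = (pointwise_const \<beta> * M) powr (q - 1) * h powr (q - 1)
      * u powr (- ((q - 1) / 2))"
    using u0 by (simp add: B_def powr_half_sqrt[symmetric] powr_mult powr_divide powr_powr
        powr_minus_divide)
  finally show ?thesis by (simp add: algebra_simps)
qed

lemma wsdiff_powr_le:
  assumes "-1 + 8*h^2 \<le> x" "x \<le> 1 - 8*h^2" "0 < u" "u \<le> 1 - x" "0 < q"
  shows "wsdiff x powr q \<le> (pointwise_const \<beta> * M * h / sqrt u) powr q"
  using wsdiff_le[OF assms(1-4)] wsdiff_nonneg[OF assms(1,2)] assms(5) by (intro powr_mono2) auto

lemma integral_wsdiff_powr_left_le:
  assumes q: "1 \<le> q"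
  shows "integral {-1 + 8*h^2 .. 0} (\<lambda>x. wsdiff x powr q) \<le> (pointwise_const \<beta> * M) powr q * h^2"
proof -
  let ?g = "\<lambda>x. wsdiff x powr q" and ?a = "-1 + 8*h^2"
  have a: "?a \<le> -h" using step_sq_small step_le by linarith
  have int: "?g integrable_on {c..d}" if "?a \<le> c" "d \<le> 0" for c d
    using that q step_sq_small by (intro wsdiff_powr_integrable) auto
  have "integral {?a .. 0} ?g = integral {?a .. -h} ?g + integral {-h .. 0} ?g"
    using int[of ?a 0] a step_pos by (intro Henstock_Kurzweil_Integration.integral_combine[symmetric]) auto
  moreover have "integral {?a .. -h} ?g = 0"
    using q integral_cong[of "{?a .. -h}" ?g "\<lambda>_. 0"] by (simp add: wsdiff_def sdiff_eq_0_left)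
  moreover have "integral {-h .. 0} ?g \<le> integral {-h .. 0} (\<lambda>_. (pointwise_const \<beta> * M * h) powr q)"
    using int[of "-h" 0] a q step_pos wsdiff_powr_le[of _ 1 q] by (intro integral_le) auto
  ultimately have "integral {?a .. 0} ?g \<le> (pointwise_const \<beta> * M) powr q * (h powr q * h)"
    using step_pos bound_nonneg by (simp add: powr_mult algebra_simps)
  also have "\<dots> \<le> (pointwise_const \<beta> * M) powr q * h^2"
  proof (intro mult_left_mono)
    have "h powr q \<le> h powr 1" using step_pos step_le q by (intro powr_mono') auto
    then show "h powr q * h \<le> h^2" using step_pos by (simp add: power2_eq_square)
  qed simp
  finally show ?thesis .
qed

lemma integral_wsdiff_powr_right_le:
  assumes q: "1 \<le> q" and v: "8*h^2 \<le> v" "v \<le> 1" "v < 32*h^2"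
  shows "integral {1 - v .. 1 - 8*h^2} (\<lambda>x. wsdiff x powr q) \<le> (pointwise_const \<beta> * M) powr q * (32*h^2)"
proof -
  have c: "0 < 8*h^2" using step_pos by simp
  have "sqrt (h^2) \<le> sqrt (8*h^2)" by (intro real_sqrt_le_mono) simp
  then have bound: "pointwise_const \<beta> * M * h / sqrt (8*h^2) \<le> pointwise_const \<beta> * M"
    using c step_pos bound_nonneg by (simp add: divide_le_eq pointwise_const_def mult_left_mono)
  have "wsdiff x powr q \<le> (pointwise_const \<beta> * M) powr q" if "x \<in> {1 - v .. 1 - 8*h^2}" for x
  proof (rule order_trans[OF wsdiff_powr_le[of x "8*h^2" q]])
    show "(pointwise_const \<beta> * M * h / sqrt (8*h^2)) powr q \<le> (pointwise_const \<beta> * M) powr q"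
      using c step_pos bound_nonneg q
      by (intro powr_mono2 bound) (auto simp: pointwise_const_def)
  qed (use that v q c step_sq_small in auto)
  then have "integral {1 - v .. 1 - 8*h^2} (\<lambda>x. wsdiff x powr q)
      \<le> integral {1 - v .. 1 - 8*h^2} (\<lambda>_. (pointwise_const \<beta> * M) powr q)"
    using v q step_sq_small by (intro integral_le wsdiff_powr_integrable) auto
  also have "\<dots> \<le> (pointwise_const \<beta> * M) powr q * (32*h^2)"
    using v by (simp add: mult.commute mult_left_mono)
  finally show ?thesis .
qed

lemma integral_wsdiff_powr_middle_le:
  assumes q: "1 < q" and N: "16*h^2 \<le> (1/2)^N"
  shows "integral {0 .. 1 - (1/2)^N} (\<lambda>x. wsdiff x powr q)
    \<le> 2 powr ((q - 1) / 2) / (2 powr ((q - 1) / 2) - 1) * dyadic_const \<beta> * (pointwise_const \<beta> / 4) powr (q - 1)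
       * M powr q * h^2"
proof -
  define p where "p = (q - 1) / 2"
  define P where "P = (pointwise_const \<beta> * M) powr (q - 1) * (dyadic_const \<beta> * M * h^2) * h powr (q - 1)"
  have p: "0 < p" using q by (simp add: p_def)
  have P: "0 \<le> P" using bound_nonneg by (simp add: P_def dyadic_const_def pointwise_const_def)
  define r where "r = 2 powr p"
  have r: "1 < r" using p by (simp add: r_def)
  have "integral {0 .. 1 - (1/2)^N} (\<lambda>x. wsdiff x powr q) \<le> r / (r - 1) * P * ((1/2)^N) powr (-p)"
    unfolding r_def
  proof (rule integral_dyadic_le[OF p P])
    have "8*h^2 \<le> (1/2)^N" using N zero_le_power2[of h] by linarith
    then show "(\<lambda>x. wsdiff x powr q) integrable_on {0 .. 1 - (1/2)^N}"
      using q step_sq_small by (intro wsdiff_powr_integrable) auto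
    fix k assume "k < N"
    then have "(1/2::real)^N \<le> (1/2)^Suc k" by (intro power_decreasing) auto
    then show "integral {1 - (1/2)^k .. 1 - (1/2)^Suc k} (\<lambda>x. wsdiff x powr q) \<le> P * ((1/2)^Suc k) powr (-p)"
      using integral_wsdiff_powr_dyadic_le[of "(1/2)^Suc k" q] N q
      by (simp add: P_def p_def power_le_one)
  qed
  also have "\<dots> \<le> r / (r - 1) * P * (16*h^2) powr (-p)"
    using N p P r step_pos by (intro mult_left_mono powr_mono2') auto
  also have "\<dots> = r / (r - 1) * (P * (16*h^2) powr (-p))" by (simp only: mult.assoc)
  also have "P * (16*h^2) powr (-p)
      = dyadic_const \<beta> * (pointwise_const \<beta> powr (q - 1) * (1/4) powr (q - 1)) * (M powr (q - 1) * M) * h^2"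
    using powr_mult_sixteen_sq_powr[OF step_pos, of "q - 1"] bound_nonneg
    by (simp add: P_def p_def powr_mult pointwise_const_def algebra_simps)
  also have "\<dots> = dyadic_const \<beta> * (pointwise_const \<beta> / 4) powr (q - 1) * M powr q * h^2"
    using bound_nonneg q by (simp add: powr_minus_one_mult powr_mult[symmetric] pointwise_const_def)
  finally show ?thesis by (simp add: r_def p_def mult.assoc)
qed

lemma integral_wsdiff_powr_le:
  assumes q: "1 < q"
  shows "integral {-1 + 8*h^2 .. 1 - 8*h^2} (\<lambda>x. wsdiff x powr q) \<le> main_const \<beta> q * M powr q * h^2"
proof -
  let ?g = "\<lambda>x. wsdiff x powr q"
  obtain N where N: "16*h^2 \<le> (1/2)^N" "(1/2::real)^N < 32*h^2"
    using exists_dyadic_between[of "16*h^2"] step_pos step_sq_small by auto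
  let ?a = "-1 + 8*h^2" and ?c = "1 - (1/2::real)^N" and ?e = "1 - 8*h^2"
  have c: "0 \<le> ?c" "?c \<le> ?e" using N power_le_one[of "1/2::real" N] by auto
  have "integral {?a .. ?e} ?g = integral {?a .. 0} ?g + integral {0 .. ?c} ?g + integral {?c .. ?e} ?g"
  proof -
    have int: "?g integrable_on {?a .. ?e}" using q by (intro wsdiff_powr_integrable) auto
    have "integral {?a .. ?e} ?g = integral {?a .. ?c} ?g + integral {?c .. ?e} ?g"
      using c step_sq_small int by (intro Henstock_Kurzweil_Integration.integral_combine[symmetric]) auto
    moreover have "integral {?a .. ?c} ?g = integral {?a .. 0} ?g + integral {0 .. ?c} ?g"
      using c step_sq_small by (intro Henstock_Kurzweil_Integration.integral_combine[symmetric]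
          integrable_subinterval_real[OF int]) auto
    ultimately show ?thesis by simp
  qed
  also have "\<dots> \<le> (pointwise_const \<beta> * M) powr q * h^2
      + 2 powr ((q - 1) / 2) / (2 powr ((q - 1) / 2) - 1) * dyadic_const \<beta> * (pointwise_const \<beta> / 4) powr (q - 1)
        * M powr q * h^2
      + (pointwise_const \<beta> * M) powr q * (32*h^2)"
    using q N by (intro add_mono integral_wsdiff_powr_left_le integral_wsdiff_powr_middle_le
        integral_wsdiff_powr_right_le) (auto simp: power_le_one)
  also have "\<dots> = main_const \<beta> q * M powr q * h^2"
    using bound_nonneg by (simp add: main_const_def powr_mult pointwise_const_def algebra_simps)
  finally show ?thesis .
qed

lemma Lq_norm_main_le:
  assumes q: "1 < q"
  shows "Lq_norm {-1 + 8*h^2 .. 1 - 8*h^2} q (\<lambda>x. wbb \<beta> x * Delta2 f (h * phi x) x)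
    \<le> ennreal (main_const \<beta> q powr (1/q) * M * h powr (2/q))"
proof -
  have "Lq_norm {-1 + 8*h^2 .. 1 - 8*h^2} q (\<lambda>x. wbb \<beta> x * Delta2 f (h * phi x) x)
     \<le> ennreal ((main_const \<beta> q * M powr q * h^2) powr (1/q))"
  proof (rule Lq_norm_le_integral[OF _ _ _ _ integral_wsdiff_powr_le[OF q]])
    show "continuous_on {-1 + 8*h^2 .. 1 - 8*h^2} (\<lambda>x. wsdiff x powr q)"
      using wsdiff_nonneg q by (intro continuous_on_powr' continuous_on_wsdiff continuous_intros) auto
    show "\<bar>wbb \<beta> x * Delta2 f (h * phi x) x\<bar> powr q = wsdiff x powr q"
      if "x \<in> {-1 + 8*h^2 .. 1 - 8*h^2}" for x
      using that Delta2_eq_sdiff wsdiff_nonneg by (simp add: wsdiff_def)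
  qed (use q step_sq_small in auto)
  also have "(main_const \<beta> q * M powr q * h^2) powr (1/q) = main_const \<beta> q powr (1/q) * M * h powr (2/q)"
    using q bound_nonneg step_pos by (simp add: powr_mult powr_powr square_powr_inverse)
  finally show ?thesis .
qed

end

section \<open>The three parts of the modulus\<close>

lemma Omega_main_le:
  assumes "0 < q" "0 \<le> K"
    and "\<And>h. h \<in> {0<..\<delta>} \<Longrightarrow>
      Lq_norm {-1 + 8*h^2 .. 1 - 8*h^2} q (\<lambda>x. wbb \<beta> x * Delta2 f (h * phi x) x) \<le> ennreal (K * h powr (2/q))"
  shows "Omega_main \<beta> q f \<delta> \<le> ennreal (K * \<delta> powr (2/q))"
  unfolding Omega_main_def
proof (rule SUP_least)
  fix h assume h: "h \<in> {0<..\<delta>}"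
  have "K * h powr (2/q) \<le> K * \<delta> powr (2/q)"
    using assms h by (intro mult_left_mono powr_mono2) auto
  then show "Lq_norm {-1 + 8*h\<^sup>2 .. 1 - 8*h\<^sup>2} q (\<lambda>x. wbb \<beta> x * Delta2 f (h * phi x) x)
      \<le> ennreal (K * \<delta> powr (2/q))"
    using assms(3)[OF h] by (meson ennreal_leI order_trans)
qed

lemma Omega_fwd_le:
  assumes "0 < q" "0 < \<delta>" "0 \<le> B"
    and "\<And>h x. h \<in> {0<..8*\<delta>^2} \<Longrightarrow> x \<in> {-1 .. -1 + 8*\<delta>^2} \<Longrightarrow> \<bar>wbb \<beta> x * Delta2_fwd f h x\<bar> \<le> B"
  shows "Omega_fwd \<beta> q f \<delta> \<le> ennreal (B * 8 powr (1/q) * \<delta> powr (2/q))"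
  unfolding Omega_fwd_def
proof (rule SUP_least)
  fix h assume "h \<in> {0<..8*\<delta>^2}"
  then have "Lq_norm {-1 .. -1 + 8*\<delta>^2} q (\<lambda>x. wbb \<beta> x * Delta2_fwd f h x)
      \<le> ennreal (B * ((-1 + 8*\<delta>^2) - (-1)) powr (1/q))"
    using assms by (intro Lq_norm_le_sup) auto
  then show "Lq_norm {-1 .. -1 + 8*\<delta>\<^sup>2} q (\<lambda>x. wbb \<beta> x * Delta2_fwd f h x)
      \<le> ennreal (B * 8 powr (1/q) * \<delta> powr (2/q))"
    using assms by (simp add: powr_mult square_powr_inverse mult.assoc)
qed

lemma Omega_bwd_le:
  assumes "0 < q" "0 < \<delta>" "0 \<le> B"
    and "\<And>h x. h \<in> {0<..8*\<delta>^2} \<Longrightarrow> x \<in> {1 - 8*\<delta>^2 .. 1} \<Longrightarrow> \<bar>wbb \<beta> x * Delta2_bwd f h x\<bar> \<le> B"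
  shows "Omega_bwd \<beta> q f \<delta> \<le> ennreal (B * 8 powr (1/q) * \<delta> powr (2/q))"
  unfolding Omega_bwd_def
proof (rule SUP_least)
  fix h assume "h \<in> {0<..8*\<delta>^2}"
  then have "Lq_norm {1 - 8*\<delta>^2 .. 1} q (\<lambda>x. wbb \<beta> x * Delta2_bwd f h x)
      \<le> ennreal (B * (1 - (1 - 8*\<delta>^2)) powr (1/q))"
    using assms by (intro Lq_norm_le_sup) auto
  then show "Lq_norm {1 - 8*\<delta>\<^sup>2 .. 1} q (\<lambda>x. wbb \<beta> x * Delta2_bwd f h x)
      \<le> ennreal (B * 8 powr (1/q) * \<delta> powr (2/q))"
    using assms by (simp add: powr_mult square_powr_inverse mult.assoc)
qed

context M2plus_bounded
begin

lemma omega_phi2_le: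
  assumes \<beta>: "0 \<le> \<beta>" and q: "1 < q" and \<delta>: "0 < \<delta>" "\<delta> \<le> 1/4"
  shows "omega_phi2 \<beta> q f \<delta> \<le> ennreal (omega_const \<beta> q * \<delta> powr (2/q) * M)"
proof -
  have small: "8 * \<delta>^2 \<le> 1/2" using eight_sq_le_half \<delta> by simp
  have "Omega_main \<beta> q f \<delta> \<le> ennreal (main_const \<beta> q powr (1/q) * M * \<delta> powr (2/q))"
  proof (rule Omega_main_le)
    fix h assume "h \<in> {0<..\<delta>}"
    then interpret main_term f \<beta> M h by unfold_locales (use \<beta> \<delta> in auto)
    show "Lq_norm {-1 + 8*h^2 .. 1 - 8*h^2} q (\<lambda>x. wbb \<beta> x * Delta2 f (h * phi x) x)
        \<le> ennreal (main_const \<beta> q powr (1/q) * M * h powr (2/q))"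
      by (rule Lq_norm_main_le[OF q])
  qed (use q bound_nonneg in auto)
  moreover have "Omega_fwd \<beta> q f \<delta> \<le> ennreal (2 * ((4/3) powr \<beta> * M) * 8 powr (1/q) * \<delta> powr (2/q))"
  proof (rule Omega_fwd_le)
    fix h x assume "h \<in> {0<..8*\<delta>^2}" "x \<in> {-1 .. -1 + 8*\<delta>^2}"
    then show "\<bar>wbb \<beta> x * Delta2_fwd f h x\<bar> \<le> 2 * ((4/3) powr \<beta> * M)"
      using small \<beta> by (intro Delta2_fwd_bound) auto
  qed (use q \<delta> bound_nonneg in auto)
  moreover have "Omega_bwd \<beta> q f \<delta> \<le> ennreal (2 * M * 8 powr (1/q) * \<delta> powr (2/q))"
  proof (rule Omega_bwd_le)
    fix h x assume "h \<in> {0<..8*\<delta>^2}" "x \<in> {1 - 8*\<delta>^2 .. 1}"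
    then show "\<bar>wbb \<beta> x * Delta2_bwd f h x\<bar> \<le> 2 * M"
      using small by (intro Delta2_bwd_bound) auto
  qed (use q \<delta> bound_nonneg in auto)
  ultimately have "omega_phi2 \<beta> q f \<delta> \<le> ennreal (main_const \<beta> q powr (1/q) * M * \<delta> powr (2/q))
      + ennreal (2 * ((4/3) powr \<beta> * M) * 8 powr (1/q) * \<delta> powr (2/q))
      + ennreal (2 * M * 8 powr (1/q) * \<delta> powr (2/q))"
    unfolding omega_phi2_def by (intro add_mono)
  also have "\<dots> = ennreal (main_const \<beta> q powr (1/q) * M * \<delta> powr (2/q)
      + 2 * ((4/3) powr \<beta> * M) * 8 powr (1/q) * \<delta> powr (2/q) + 2 * M * 8 powr (1/q) * \<delta> powr (2/q))"
    using bound_nonneg by (simp add: ennreal_plus)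
  also have "\<dots> = ennreal (omega_const \<beta> q * \<delta> powr (2/q) * M)"
    by (simp add: omega_const_def algebra_simps)
  finally show ?thesis .
qed

lemma omega_phi2_eq_0_if_exponent_neg:
  assumes \<beta>: "\<beta> < 0" and q: "1 < q" and \<delta>: "0 < \<delta>" "\<delta> \<le> 1/4"
  shows "omega_phi2 \<beta> q f \<delta> = 0"
proof -
  have small: "8 * \<delta>^2 \<le> 1/2" using eight_sq_le_half \<delta> by simp
  note zero = vanishes_if_exponent_neg[OF \<beta>]
  have "Omega_main \<beta> q f \<delta> \<le> ennreal (0 * \<delta> powr (2/q))"
  proof (rule Omega_main_le)
    fix h assume "h \<in> {0<..\<delta>}"
    then interpret phi_step h by unfold_locales (use \<delta> in auto)
    have "Lq_norm {-1 + 8*h^2 .. 1 - 8*h^2} q (\<lambda>x. wbb \<beta> x * Delta2 f (h * phi x) x)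
        \<le> ennreal (0 * ((1 - 8*h^2) - (-1 + 8*h^2)) powr (1/q))"
      using q step_sq_small Delta2_phi_step_eq_0[OF zero] by (intro Lq_norm_le_sup) auto
    then show "Lq_norm {-1 + 8*h^2 .. 1 - 8*h^2} q (\<lambda>x. wbb \<beta> x * Delta2 f (h * phi x) x)
        \<le> ennreal (0 * h powr (2/q))" by simp
  qed (use q in auto)
  moreover have "Omega_fwd \<beta> q f \<delta> \<le> ennreal (0 * 8 powr (1/q) * \<delta> powr (2/q))"
    using q \<delta> small by (intro Omega_fwd_le) (auto simp: weighted_Delta2_fwd_eq_0[OF zero])
  moreover have "Omega_bwd \<beta> q f \<delta> \<le> ennreal (0 * 8 powr (1/q) * \<delta> powr (2/q))"
    using q \<delta> small by (intro Omega_bwd_le) (auto simp: weighted_Delta2_bwd_eq_0[OF zero])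
  ultimately show ?thesis by (simp add: omega_phi2_def)
qed

end

theorem lemma5p3:
  fixes \<beta> q :: real
  assumes "1 < q"
  shows "\<exists>c>0. \<forall>f \<delta>. in_M2plus f \<longrightarrow> in_W_inf \<beta> f \<longrightarrow> 0 < \<delta> \<longrightarrow> \<delta> \<le> 1/4 \<longrightarrow>
           omega_phi2 \<beta> q f \<delta> \<le> ennreal (c * \<delta> powr (2 / q) * wsup_norm \<beta> f)"
proof (intro exI[of _ "omega_const \<beta> q"] conjI allI impI)
  show "0 < omega_const \<beta> q"
    unfolding omega_const_def by (intro add_nonneg_pos mult_pos_pos add_nonneg_pos) auto
  fix f :: "real \<Rightarrow> real" and \<delta> :: real
  assume f: "in_M2plus f" "in_W_inf \<beta> f" and \<delta>: "0 < \<delta>" "\<delta> \<le> 1/4"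
  interpret M2plus_bounded f \<beta> "wsup_norm \<beta> f" using f by (rule M2plus_bounded_wsup_norm)
  show "omega_phi2 \<beta> q f \<delta> \<le> ennreal (omega_const \<beta> q * \<delta> powr (2 / q) * wsup_norm \<beta> f)"
  proof (cases "0 \<le> \<beta>")
    case True
    then show ?thesis using omega_phi2_le assms \<delta> by blast
  next
    case False
    then show ?thesis using omega_phi2_eq_0_if_exponent_neg assms \<delta> by simp
  qed
qed

end
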